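(* For every prime power $q$, there are no cutting $[7,4]_{q^3/q}$ systems.
   Context: An $[n,k]_{q^m/q}$ system is an $\mathbb F_q$-subspace $U$ of $\mathbb F_{q^m}^k$ with $\dim_{\mathbb F_q}(U)=n$ and $\langle U\rangle_{\mathbb F_{q^m}}=\mathbb F_{q^m}^k$. It is cutting if for every $\mathbb F_{q^m}$-hyperplane $H$ of $\mathbb F_{q^m}^k$ one has $\langle H\cap U\rangle_{\mathbb F_{q^m}}=H$. *)

theory Defs
  imports "HOL-Analysis.Analysis"
begin

definition is_subfield :: "'a::field set \<Rightarrow> bool" where
  "is_subfield K \<longleftrightarrow> 0 \<in> K \<and> 1 \<in> K \<and>
     (\<forall>x\<in>K. \<forall>y\<in>K. x + y \<in> K \<and> x * y \<in> K) \<and>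
     (\<forall>x\<in>K. - x \<in> K) \<and> (\<forall>x\<in>K. x \<noteq> 0 \<longrightarrow> inverse x \<in> K)"

definition span_over :: "'a::field set \<Rightarrow> ('a ^ 'n) set \<Rightarrow> ('a ^ 'n) set" where
  "span_over F S = {x. \<exists>T c. finite T \<and> T \<subseteq> S \<and> (\<forall>v\<in>T. c v \<in> F) \<and>
                          x = (\<Sum>v\<in>T. c v *s v)}"

definition subspace_over :: "'a::field set \<Rightarrow> ('a ^ 'n) set \<Rightarrow> bool" where
  "subspace_over F U \<longleftrightarrow> 0 \<in> U \<and> (\<forall>x\<in>U. \<forall>y\<in>U. x + y \<in> U) \<and>
                        (\<forall>c\<in>F. \<forall>x\<in>U. c *s x \<in> U)"

definition indep_over :: "'a::field set \<Rightarrow> ('a ^ 'n) set \<Rightarrow> bool" where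
  "indep_over F B \<longleftrightarrow> (\<forall>T c. finite T \<and> T \<subseteq> B \<and> (\<forall>v\<in>T. c v \<in> F) \<and>
                          (\<Sum>v\<in>T. c v *s v) = 0 \<longrightarrow> (\<forall>v\<in>T. c v = 0))"

definition subspace_dim_over :: "'a::field set \<Rightarrow> ('a ^ 'n) set \<Rightarrow> nat \<Rightarrow> bool" where
  "subspace_dim_over F U d \<longleftrightarrow> subspace_over F U \<and>
     (\<exists>B. finite B \<and> card B = d \<and> B \<subseteq> U \<and> indep_over F B \<and> span_over F B = U)"

definition hyperplane :: "'a::field ^ 'n \<Rightarrow> ('a ^ 'n) set" where
  "hyperplane a = {x. (\<Sum>i\<in>UNIV. a $ i * x $ i) = 0}"

text \<open>An [n,k]_{q^m/q} system: K-subspace U of L^k (here k = CARD('n)) of K-dimension n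
  whose L-span is all of L^k.\<close>
definition is_system :: "'a::field set \<Rightarrow> ('a ^ 'n) set \<Rightarrow> nat \<Rightarrow> bool" where
  "is_system K U n \<longleftrightarrow> subspace_dim_over K U n \<and> span_over UNIV U = UNIV"

definition cutting :: "('a::field ^ 'n) set \<Rightarrow> bool" where
  "cutting U \<longleftrightarrow> (\<forall>a. a \<noteq> 0 \<longrightarrow> span_over UNIV (hyperplane a \<inter> U) = hyperplane a)"

end

theory Submission
  imports Defs
begin

text \<open>
  Write \<open>L\<close> for the field of order \<open>q\<^sup>3\<close>, \<open>V = L\<^sup>4\<close>, so that \<open>|U| = q\<^sup>7\<close> and \<open>|V| = q\<^bsup>12\<^esup>\<close>.
  First, \<open>U\<close> meets some plane \<open>W = L u + L x\<close> in at least \<open>q\<^sup>4\<close> vectors. Pick \<open>l \<in> L - K\<close>;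
  pigeonhole on \<open>(x, y) \<mapsto> x - l y\<close> gives \<open>u \<noteq> 0\<close> with \<open>u, l u \<in> U\<close>. If \<open>L u \<subseteq> U\<close>, take
  \<open>L u + K x\<close> for any \<open>x \<in> U - L u\<close>. Otherwise \<open>U \<inter> L u = (K + K l) u\<close> (since \<open>[L : K] = 3\<close>),
  and counting the solutions of \<open>l x = y + p\<close> with \<open>x, y \<in> U\<close>, \<open>p \<in> L u\<close> produces
  \<open>x \<notin> L u\<close> with \<open>l x \<in> U + L u\<close>; then \<open>u, l u, x, l x\<close> span a 4-dimensional \<open>K\<close>-space
  inside \<open>U \<inter> W\<close>.
  Second, \<open>W\<close> is cut out by two independent forms \<open>a, b\<close>. If \<open>U\<close> is cutting, each hyperplane
  \<open>a + t b = 0\<close> is spanned by its points in \<open>U\<close>, so it contains some \<open>x\<^sub>t \<in> U\<close> with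
  \<open>b(x\<^sub>t) \<noteq> 0\<close>. The translates \<open>(U \<inter> W) + k x\<^sub>t\<close> (\<open>k \<in> K - {0}\<close>, \<open>t \<in> L\<close>) are pairwise
  disjoint subsets of \<open>U - W\<close>, whence \<open>q\<^sup>7 = |U| \<ge> q\<^sup>4 (1 + (q - 1) q\<^sup>3)\<close>, which is false.
\<close>

lemma card_le_card_image_mult_card_kernel:
  fixes f :: "'a::ab_group_add \<Rightarrow> 'b"
  assumes "finite G" and "finite Z"
    and "\<And>x y. x \<in> G \<Longrightarrow> y \<in> G \<Longrightarrow> f x = f y \<Longrightarrow> x - y \<in> Z"
  shows "card G \<le> card (f ` G) * card Z"
proof -
  define r where "r x = inv_into G f (f x)" for x
  have r: "r x \<in> G" "f (r x) = f x" if "x \<in> G" for x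
    using that by (auto simp: r_def inv_into_into f_inv_into_f)
  have "inj_on (\<lambda>x. (f x, x - r x)) G"
    by (rule inj_onI) (auto simp: r_def)
  moreover have "(\<lambda>x. (f x, x - r x)) ` G \<subseteq> f ` G \<times> Z"
    using assms(3) r by auto
  ultimately have "card G \<le> card (f ` G \<times> Z)"
    using assms(1,2) by (intro card_inj_on_le) auto
  then show ?thesis by (simp add: card_cartesian_product)
qed

section \<open>Linear forms, lines and planes\<close>

definition dot :: "'a::field ^ 'n \<Rightarrow> 'a ^ 'n \<Rightarrow> 'a" where
  "dot a x = (\<Sum>i\<in>UNIV. a $ i * x $ i)"

lemma hyperplane_dot: "hyperplane a = {x. dot a x = 0}"
  by (simp add: hyperplane_def dot_def)

lemma dot_add_left: "dot (a + b) x = dot a x + dot b x"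
  by (simp add: dot_def distrib_right sum.distrib)

lemma dot_add_right: "dot a (x + y) = dot a x + dot a y"
  by (simp add: dot_def distrib_left sum.distrib)

lemma dot_diff_left: "dot (a - b) x = dot a x - dot b x"
  by (simp add: dot_def algebra_simps sum_subtractf)

lemma dot_smult_left: "dot (c *s a) x = c * dot a x"
  by (simp add: dot_def sum_distrib_left algebra_simps)

lemma dot_smult_right: "dot a (c *s x) = c * dot a x"
  by (simp add: dot_def sum_distrib_left algebra_simps)

lemma dot_sum_right: "dot a (sum f T) = (\<Sum>v\<in>T. dot a (f v))"
  unfolding dot_def sum_component sum_distrib_left by (rule sum.swap)

lemmas dot_linear = dot_add_left dot_add_right dot_smult_left dot_smult_right

definition line :: "'a::field ^ 'n \<Rightarrow> ('a ^ 'n) set" where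
  "line u = range (\<lambda>c. c *s u)"

definition plane :: "'a::field ^ 'n \<Rightarrow> 'a ^ 'n \<Rightarrow> ('a ^ 'n) set" where
  "plane u x = range (\<lambda>(c, d). c *s u + d *s x)"

lemma line_diff:
  assumes "p \<in> line u" and "p' \<in> line u"
  shows "p - p' \<in> line u"
proof -
  obtain c c' where "p = c *s u" "p' = c' *s u" using assms unfolding line_def by blast
  then have "p - p' = (c - c') *s u" by simp
  then show ?thesis unfolding line_def by blast
qed

lemma line_smult: "p \<in> line u \<Longrightarrow> c *s p \<in> line u"
  unfolding line_def by auto

lemma card_line:
  fixes u :: "'a::{field,finite} ^ 'n"
  assumes "u \<noteq> 0"
  shows "card (line u) = CARD('a)"
  using assms
  unfolding line_def by (subst card_image) (auto intro: injI)

lemma smult_coords_unique: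
  fixes u x :: "'a::field ^ 'n"
  assumes "u \<noteq> 0" and "x \<notin> line u" and "A *s u + B *s x = A' *s u + B' *s x"
  shows "A = A' \<and> B = B'"
proof -
  have "B = B'"
  proof (rule ccontr)
    assume "B \<noteq> B'"
    define d where "d = B - B'"
    then have "d \<noteq> 0" using \<open>B \<noteq> B'\<close> by simp
    have "d *s x = (A' - A) *s u"
      using assms(3) by (simp add: d_def algebra_simps)
    then have "x = (inverse d * (A' - A)) *s u"
      using \<open>d \<noteq> 0\<close> by (metis vector_smult_assoc vector_smult_lid left_inverse)
    then show False using assms(2) unfolding line_def by blast
  qed
  with assms(1,3) show ?thesis by simp
qed

section \<open>Subfields and subspaces over a subfield\<close>

lemma subfield_zero: "is_subfield K \<Longrightarrow> 0 \<in> K"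
  and subfield_one: "is_subfield K \<Longrightarrow> 1 \<in> K"
  and subfield_add: "is_subfield K \<Longrightarrow> x \<in> K \<Longrightarrow> y \<in> K \<Longrightarrow> x + y \<in> K"
  and subfield_mult: "is_subfield K \<Longrightarrow> x \<in> K \<Longrightarrow> y \<in> K \<Longrightarrow> x * y \<in> K"
  and subfield_uminus: "is_subfield K \<Longrightarrow> x \<in> K \<Longrightarrow> - x \<in> K"
  and subfield_inverse: "is_subfield K \<Longrightarrow> x \<in> K \<Longrightarrow> inverse x \<in> K"
  unfolding is_subfield_def by (auto simp del: inverse_nonzero_iff_nonzero)

lemma subfield_diff: "is_subfield K \<Longrightarrow> x \<in> K \<Longrightarrow> y \<in> K \<Longrightarrow> x - y \<in> K"
  unfolding diff_conv_add_uminus by (intro subfield_add subfield_uminus)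

lemma subfield_divide: "is_subfield K \<Longrightarrow> x \<in> K \<Longrightarrow> y \<in> K \<Longrightarrow> x / y \<in> K"
  by (simp add: divide_inverse subfield_inverse subfield_mult)

lemma two_le_card_subfield: "is_subfield (K :: 'a::{field,finite} set) \<Longrightarrow> 2 \<le> card K"
  using card_mono[of K "{0, 1}"] by (simp add: subfield_zero subfield_one)

lemma subspace_over_add: "subspace_over K U \<Longrightarrow> x \<in> U \<Longrightarrow> y \<in> U \<Longrightarrow> x + y \<in> U"
  and subspace_over_smult: "subspace_over K U \<Longrightarrow> c \<in> K \<Longrightarrow> x \<in> U \<Longrightarrow> c *s x \<in> U"
  unfolding subspace_over_def by blast+

lemma subspace_over_diff:
  assumes K: "is_subfield K" and S: "subspace_over K U" and "x \<in> U" "y \<in> U"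
  shows "x - y \<in> U"
proof -
  have "(- 1) *s y \<in> U"
    using S subfield_uminus[OF K subfield_one[OF K]] \<open>y \<in> U\<close> by (rule subspace_over_smult)
  then have "x + (- 1) *s y \<in> U" using S \<open>x \<in> U\<close> subspace_over_add by blast
  then show ?thesis by (simp add: vector_sneg_minus1[symmetric])
qed

lemma card_subspace_dim_over:
  fixes U :: "('a::field ^ 'n) set"
  assumes K: "is_subfield K" and "subspace_dim_over K U d"
  shows "card U = card K ^ d"
proof -
  obtain B where B: "finite B" "card B = d" "indep_over K B" "span_over K B = U"
    using assms(2) unfolding subspace_dim_over_def by blast
  define f where "f c = (\<Sum>v\<in>B. c v *s v)" for c
  have "bij_betw f (PiE B (\<lambda>_. K)) U"
  proof (rule bij_betwI')
    fix c e assume c: "c \<in> PiE B (\<lambda>_. K)" and e: "e \<in> PiE B (\<lambda>_. K)"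
    show "f c = f e \<longleftrightarrow> c = e"
    proof
      assume "f c = f e"
      then have "(\<Sum>v\<in>B. (c v - e v) *s v) = 0"
        unfolding f_def by (simp add: vector_sub_rdistrib sum_subtractf)
      moreover have "\<forall>v\<in>B. c v - e v \<in> K" using c e subfield_diff[OF K] by auto
      ultimately have "\<forall>v\<in>B. c v - e v = 0"
        using B(1,3) unfolding indep_over_def
        by (elim allE[where x = B] allE[where x = "\<lambda>v. c v - e v"]) auto
      then show "c = e" using c e by (intro PiE_ext) auto
    qed simp
  next
    fix c assume "c \<in> PiE B (\<lambda>_. K)"
    then show "f c \<in> U"
      unfolding f_def B(4)[symmetric] span_over_def using B(1) by (intro CollectI exI[of _ B]) auto
  next
    fix x assume "x \<in> U"
    then obtain T c where T: "finite T" "T \<subseteq> B" "\<forall>v\<in>T. c v \<in> K" "x = (\<Sum>v\<in>T. c v *s v)"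
      using B(4) unfolding span_over_def by blast
    define c' where "c' v = (if v \<in> B then (if v \<in> T then c v else 0) else undefined)" for v
    have "c' \<in> PiE B (\<lambda>_. K)" using T subfield_zero[OF K] by (simp add: c'_def PiE_iff extensional_def)
    moreover have "f c' = x"
    proof -
      have "f c' = (\<Sum>v\<in>T. c' v *s v)"
        unfolding f_def using B(1) T(2) by (intro sum.mono_neutral_right) (auto simp: c'_def)
      also have "\<dots> = x" using T(2,4) by (simp add: c'_def subset_iff)
      finally show ?thesis .
    qed
    ultimately show "\<exists>c\<in>PiE B (\<lambda>_. K). x = f c" by metis
  qed
  then have "card U = card (PiE B (\<lambda>_. K))" by (simp add: bij_betw_same_card)
  also have "\<dots> = card K ^ d" using B by (simp add: card_PiE)
  finally show ?thesis .
qed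

lemma subfield_coords_unique2:
  assumes K: "is_subfield K" and "l \<notin> K" and "\<alpha> \<in> K" "\<beta> \<in> K" "\<alpha>' \<in> K" "\<beta>' \<in> K"
    and "\<alpha> + \<beta> * l = \<alpha>' + \<beta>' * l"
  shows "\<alpha> = \<alpha>' \<and> \<beta> = \<beta>'"
proof -
  have "\<beta> = \<beta>'"
  proof (rule ccontr)
    assume "\<beta> \<noteq> \<beta>'"
    with assms(7) have "l = (\<alpha>' - \<alpha>) / (\<beta> - \<beta>')" by (simp add: field_simps)
    then show False using assms by (simp add: subfield_diff subfield_divide)
  qed
  with assms(7) show ?thesis by simp
qed

lemma subfield_coords_unique3:
  assumes K: "is_subfield K" and l: "l \<notin> K" and c: "\<forall>\<alpha>\<in>K. \<forall>\<beta>\<in>K. c \<noteq> \<alpha> + \<beta> * l"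
    and in_K: "\<alpha> \<in> K" "\<beta> \<in> K" "\<gamma> \<in> K" "\<alpha>' \<in> K" "\<beta>' \<in> K" "\<gamma>' \<in> K"
    and eq: "\<alpha> + \<beta> * l + \<gamma> * c = \<alpha>' + \<beta>' * l + \<gamma>' * c"
  shows "\<alpha> = \<alpha>' \<and> \<beta> = \<beta>' \<and> \<gamma> = \<gamma>'"
proof -
  have "\<gamma> = \<gamma>'"
  proof (rule ccontr)
    assume "\<gamma> \<noteq> \<gamma>'"
    from eq have "(\<gamma> - \<gamma>') * c = (\<alpha>' - \<alpha>) + (\<beta>' - \<beta>) * l"
      by (simp add: algebra_simps)
    with \<open>\<gamma> \<noteq> \<gamma>'\<close> have "c = ((\<alpha>' - \<alpha>) + (\<beta>' - \<beta>) * l) / (\<gamma> - \<gamma>')"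
      by (simp add: eq_divide_eq mult.commute)
    then have c_eq: "c = (\<alpha>' - \<alpha>) / (\<gamma> - \<gamma>') + ((\<beta>' - \<beta>) / (\<gamma> - \<gamma>')) * l"
      by (simp add: add_divide_distrib)
    have "(\<alpha>' - \<alpha>) / (\<gamma> - \<gamma>') \<in> K" and "(\<beta>' - \<beta>) / (\<gamma> - \<gamma>') \<in> K"
      using K in_K by (simp_all add: subfield_diff subfield_divide)
    from c[rule_format, OF this] c_eq show False by contradiction
  qed
  moreover from this eq have "\<alpha> + \<beta> * l = \<alpha>' + \<beta>' * l" by simp
  ultimately show ?thesis using subfield_coords_unique2[OF K l in_K(1,2,4,5)] by simp
qed

lemma subfield_cubic_extension_basis:
  fixes K :: "'a::{field,finite} set"
  assumes K: "is_subfield K" and "CARD('a) = card K ^ 3" and "l \<notin> K"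
    and "\<forall>\<alpha>\<in>K. \<forall>\<beta>\<in>K. c \<noteq> \<alpha> + \<beta> * l"
  shows "\<exists>\<alpha>\<in>K. \<exists>\<beta>\<in>K. \<exists>\<gamma>\<in>K. e = \<alpha> + \<beta> * l + \<gamma> * c"
proof -
  define s where "s = (\<lambda>(\<alpha>, \<beta>, \<gamma>). \<alpha> + \<beta> * l + \<gamma> * c)"
  have "inj_on s (K \<times> K \<times> K)"
    using subfield_coords_unique3[OF assms(1,3,4)] by (intro inj_onI) (auto simp: s_def)
  then have "card (s ` (K \<times> K \<times> K)) = CARD('a)"
    using assms(2) by (simp add: card_image card_cartesian_product power3_eq_cube)
  then have "s ` (K \<times> K \<times> K) = UNIV" by (simp add: card_eq_UNIV_imp_eq_UNIV)
  then have "e \<in> s ` (K \<times> K \<times> K)" by simp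
  then obtain p where "e = s p" "p \<in> K \<times> K \<times> K" by (rule imageE)
  then show ?thesis by (cases p) (auto simp: s_def)
qed

section \<open>Cutting systems and pencils of hyperplanes\<close>

lemma hyperplane_subset_imp_proportional:
  fixes b c :: "'a::field ^ 'n"
  assumes "c \<noteq> 0" and "hyperplane c \<subseteq> hyperplane b"
  shows "\<exists>\<mu>. b = \<mu> *s c"
proof -
  obtain j where j: "c $ j \<noteq> 0" using assms(1) by (metis vec_eq_iff zero_index)
  have "b $ i * c $ j = b $ j * c $ i" for i
  proof (cases "i = j")
    case False
    define z where "z = (\<chi> k. if k = i then c $ j else if k = j then - c $ i else 0)"
    have dot_z: "dot v z = v $ i * c $ j - v $ j * c $ i" for v
    proof -
      have "dot v z = (\<Sum>k\<in>UNIV. (if k = i then v $ i * c $ j else 0)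
                                 + (if k = j then - (v $ j * c $ i) else 0))"
        unfolding dot_def z_def using False by (intro sum.cong) auto
      then show ?thesis by (simp add: sum.distrib)
    qed
    have "z \<in> hyperplane c" by (simp add: hyperplane_dot dot_z mult.commute)
    then have "dot b z = 0" using assms(2) by (auto simp: hyperplane_dot)
    then show ?thesis by (simp add: dot_z)
  qed simp
  then have "b = (b $ j / c $ j) *s c" using j by (simp add: vec_eq_iff field_simps)
  then show ?thesis by blast
qed

lemma span_over_subset_hyperplane: "S \<subseteq> hyperplane b \<Longrightarrow> span_over F S \<subseteq> hyperplane b"
  by (auto simp: span_over_def hyperplane_dot dot_sum_right dot_smult_right subset_iff)

lemma cutting_exists_point_off_hyperplane:
  assumes "cutting U" and "c \<noteq> 0" and "\<forall>\<mu>. b \<noteq> \<mu> *s c"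
  shows "\<exists>x\<in>U. dot c x = 0 \<and> dot b x \<noteq> 0"
proof (rule ccontr)
  assume "\<not> ?thesis"
  then have "hyperplane c \<inter> U \<subseteq> hyperplane b" by (auto simp: hyperplane_dot)
  then have "hyperplane c \<subseteq> hyperplane b"
    using assms(1,2) span_over_subset_hyperplane unfolding cutting_def by metis
  then show False using hyperplane_subset_imp_proportional assms(2,3) by blast
qed

lemma pencil_not_proportional:
  fixes a b :: "'a::field ^ 'n"
  assumes "a \<noteq> 0" and "\<forall>c. b \<noteq> c *s a"
  shows "a + t *s b \<noteq> 0" and "\<forall>\<mu>. b \<noteq> \<mu> *s (a + t *s b)"
proof -
  show "a + t *s b \<noteq> 0"
  proof
    assume "a + t *s b = 0"
    then have "t *s b = - a" by (simp add: add_eq_0_iff2)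
    then have "t \<noteq> 0" using assms(1) by auto
    with \<open>t *s b = - a\<close> have "b = (- inverse t) *s a"
      by (metis vector_smult_assoc vector_smult_lid left_inverse vector_sneg_minus1
          mult_minus1 mult.commute)
    then show False using assms(2) by blast
  qed
  show "\<forall>\<mu>. b \<noteq> \<mu> *s (a + t *s b)"
  proof (intro allI notI)
    fix \<mu> assume "b = \<mu> *s (a + t *s b)"
    then have eq: "(1 - \<mu> * t) *s b = \<mu> *s a" by (simp add: algebra_simps)
    show False
    proof (cases "1 - \<mu> * t = 0")
      case True
      then have "\<mu> \<noteq> 0" by auto
      with eq True assms(1) show False by simp
    next
      case False
      with eq have "b = (\<mu> / (1 - \<mu> * t)) *s a"
        by (metis vector_smult_assoc vector_smult_lid left_inverse divide_inverse mult.commute)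
      then show False using assms(2) by blast
    qed
  qed
qed

lemma cutting_card_inter_hyperplanes_le:
  fixes U :: "('a::{field,finite} ^ 'n) set"
  assumes K: "is_subfield K" and S: "subspace_over K U" and cut: "cutting U"
    and "a \<noteq> 0" and "\<forall>c. b \<noteq> c *s a"
  shows "card (U \<inter> hyperplane a \<inter> hyperplane b) * (1 + (card K - 1) * CARD('a)) \<le> card U"
proof -
  define M where "M = U \<inter> hyperplane a \<inter> hyperplane b"
  obtain x where x: "\<And>t. x t \<in> U" "\<And>t. dot (a + t *s b) (x t) = 0" "\<And>t. dot b (x t) \<noteq> 0"
    using cutting_exists_point_off_hyperplane[OF cut pencil_not_proportional[OF assms(4,5)]] by metis
  define D where "D = M \<times> (K - {0}) \<times> (UNIV :: 'a set)"
  define g where "g = (\<lambda>(m, k, t). m + k *s x t)"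
  have dot_g: "dot (a + t *s b) (g (m, k, t)) = 0" "dot b (g (m, k, t)) = k * dot b (x t)"
    if "m \<in> M" for m k t
    using that x(2)[of t] by (auto simp: g_def M_def hyperplane_dot dot_linear)
  have "inj_on g D"
  proof (rule inj_onI)
    fix p p' assume "p \<in> D" "p' \<in> D" and eq: "g p = g p'"
    obtain m k t m' k' t' where p: "p = (m, k, t)" "p' = (m', k', t')"
      using prod_cases3 by metis
    have mk: "m \<in> M" "m' \<in> M" "k \<noteq> 0" "k' \<noteq> 0"
      using \<open>p \<in> D\<close> \<open>p' \<in> D\<close> unfolding p D_def by auto
    note eq = eq[unfolded p]
    define y where "y = g (m', k', t')"
    have "dot (a + t *s b) y = 0" "dot (a + t' *s b) y = 0"
      and b_y: "dot b y = k * dot b (x t)" "dot b y = k' * dot b (x t')"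
      unfolding y_def using dot_g mk eq by metis+
    then have "dot a y + t * dot b y = dot a y + t' * dot b y"
      by (simp only: dot_add_left dot_smult_left)
    moreover have "dot b y \<noteq> 0" using b_y(2) mk(4) x(3) by simp
    ultimately have "t = t'" by simp
    moreover from this have "k = k'" using b_y x(3) by simp
    ultimately show "p = p'" using eq p by (simp add: g_def)
  qed
  moreover have "g ` D \<subseteq> U - M"
  proof
    fix y assume "y \<in> g ` D"
    then obtain m k t where mk: "m \<in> M" "k \<in> K" "k \<noteq> 0" and y: "y = g (m, k, t)"
      unfolding D_def by auto
    have "y \<in> U"
      using mk x(1) S unfolding y g_def M_def by (auto intro!: subspace_over_add subspace_over_smult)
    moreover have "y \<notin> M" using dot_g(2)[OF mk(1)] mk(3) x(3) y by (auto simp: M_def hyperplane_dot)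
    ultimately show "y \<in> U - M" by blast
  qed
  ultimately have "card M + card D \<le> card U"
  proof -
    assume inj: "inj_on g D" and img: "g ` D \<subseteq> U - M"
    have "card (M \<union> g ` D) = card M + card (g ` D)"
      using img by (intro card_Un_disjoint) auto
    then have "card M + card D = card (M \<union> g ` D)" using card_image[OF inj] by simp
    also have "\<dots> \<le> card U" using img by (intro card_mono) (auto simp: M_def)
    finally show ?thesis .
  qed
  moreover have "card D = card M * ((card K - 1) * CARD('a))"
    using subfield_zero[OF K] by (simp add: D_def card_cartesian_product card_Diff_singleton)
  ultimately show ?thesis unfolding M_def by (simp add: algebra_simps)
qed

section \<open>Planes meeting a subspace in many vectors\<close>

lemma exists_vector_with_scaled_copy_in_subspace:
  fixes U :: "('a::{field,finite} ^ 'n) set"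
  assumes K: "is_subfield K" and S: "subspace_over K U" and "CARD('a ^ 'n) < card U * card U"
  shows "\<exists>u. u \<in> U \<and> u \<noteq> 0 \<and> l *s u \<in> U"
proof -
  have "\<not> inj_on (\<lambda>(x, y). x - l *s y) (U \<times> U)"
  proof
    assume "inj_on (\<lambda>(x, y). x - l *s y) (U \<times> U)"
    then have "card (U \<times> U) \<le> CARD('a ^ 'n)" by (intro card_inj_on_le) auto
    with assms(3) show False by (simp add: card_cartesian_product)
  qed
  then obtain x y x' y' where xy: "x \<in> U" "y \<in> U" "x' \<in> U" "y' \<in> U" "(x, y) \<noteq> (x', y')"
    and eq: "x - l *s y = x' - l *s y'"
    unfolding inj_on_def by auto
  have "y - y' \<noteq> 0" using xy(5) eq by auto
  moreover have "l *s (y - y') = x - x'" using eq by (simp add: algebra_simps)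
  ultimately show ?thesis
    using subspace_over_diff[OF K S xy(2,4)] subspace_over_diff[OF K S xy(1,3)]
    by (intro exI[of _ "y - y'"]) simp
qed

lemma card_plane_inter_ge_if_line_subset:
  fixes U :: "('a::{field,finite} ^ 'n) set"
  assumes "subspace_over K U" and "u \<noteq> 0" and "line u \<subseteq> U" and "x \<in> U" and "x \<notin> line u"
  shows "CARD('a) * card K \<le> card (U \<inter> plane u x)"
proof -
  let ?f = "\<lambda>(c, k). c *s u + k *s x"
  have "inj_on ?f (UNIV \<times> K)"
    using smult_coords_unique[OF assms(2,5)] by (intro inj_onI) auto
  moreover have "?f ` (UNIV \<times> K) \<subseteq> U \<inter> plane u x"
  proof (intro subsetI, elim imageE)
    fix y p assume y: "y = ?f p" and "p \<in> UNIV \<times> K"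
    then obtain c k where p: "p = (c, k)" and "k \<in> K" by auto
    have "c *s u \<in> U" using assms(3) unfolding line_def by auto
    then have "y \<in> U"
      unfolding y p using assms(1,4) \<open>k \<in> K\<close> by (simp add: subspace_over_add subspace_over_smult)
    moreover have "y \<in> plane u x" unfolding y p plane_def by auto
    ultimately show "y \<in> U \<inter> plane u x" by blast
  qed
  ultimately show ?thesis
    using card_inj_on_le[of ?f "UNIV \<times> K"] by (simp add: card_cartesian_product)
qed

lemma card_line_inter_subspace_le:
  fixes U :: "('a::{field,finite} ^ 'n) set"
  assumes K: "is_subfield K" and S: "subspace_over K U" and "CARD('a) = card K ^ 3"
    and "l \<notin> K" and "u \<in> U" and "l *s u \<in> U" and "\<not> line u \<subseteq> U"
  shows "card (U \<inter> line u) \<le> card K ^ 2"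
proof -
  have "U \<inter> line u \<subseteq> (\<lambda>(\<alpha>, \<beta>). (\<alpha> + \<beta> * l) *s u) ` (K \<times> K)"
  proof
    fix z assume "z \<in> U \<inter> line u"
    then obtain c where z: "z = c *s u" "c *s u \<in> U" unfolding line_def by auto
    have "\<exists>\<alpha>\<in>K. \<exists>\<beta>\<in>K. c = \<alpha> + \<beta> * l"
    proof (rule ccontr)
      assume no_coords: "\<not> ?thesis"
      have "line u \<subseteq> U"
      proof
        fix w assume "w \<in> line u"
        then obtain e where w: "w = e *s u" unfolding line_def by auto
        have "\<forall>\<alpha>\<in>K. \<forall>\<beta>\<in>K. c \<noteq> \<alpha> + \<beta> * l" using no_coords by blast
        then obtain \<alpha> \<beta> \<gamma> where "\<alpha> \<in> K" "\<beta> \<in> K" "\<gamma> \<in> K" and e: "e = \<alpha> + \<beta> * l + \<gamma> * c"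
          using subfield_cubic_extension_basis[OF K assms(3,4)] by blast
        have "w = \<alpha> *s u + \<beta> *s (l *s u) + \<gamma> *s (c *s u)"
          unfolding w e by (simp add: algebra_simps)
        then show "w \<in> U"
          using \<open>\<alpha> \<in> K\<close> \<open>\<beta> \<in> K\<close> \<open>\<gamma> \<in> K\<close> assms(5,6) z(2)
          by (blast intro: subspace_over_add[OF S] subspace_over_smult[OF S])
      qed
      with assms(7) show False ..
    qed
    then show "z \<in> (\<lambda>(\<alpha>, \<beta>). (\<alpha> + \<beta> * l) *s u) ` (K \<times> K)" using z by auto
  qed
  then have "card (U \<inter> line u) \<le> card ((\<lambda>(\<alpha>, \<beta>). (\<alpha> + \<beta> * l) *s u) ` (K \<times> K))"
    by (intro card_mono) auto
  also have "\<dots> \<le> card (K \<times> K)" by (rule card_image_le) simp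
  finally have "card (U \<inter> line u) \<le> card (K \<times> K)" .
  then show ?thesis by (simp add: card_cartesian_product power2_eq_square)
qed

lemma exists_translate_off_line:
  fixes U :: "('a::{field,finite} ^ 'n) set"
  assumes K: "is_subfield K" and S: "subspace_over K U" and "u \<noteq> 0"
    and "card K = q" and "CARD('a) = q ^ 3" and "CARD('a ^ 'n) = q ^ 12" and "card U = q ^ 7"
    and "card (U \<inter> line u) \<le> q ^ 2"
  shows "\<exists>x y. x \<in> U \<and> y \<in> U \<and> x \<notin> line u \<and> l *s x - y \<in> line u"
proof (rule ccontr)
  assume contra: "\<not> ?thesis"
  define G where "G = U \<times> U \<times> line u"
  define f :: "('a ^ 'n) \<times> ('a ^ 'n) \<times> ('a ^ 'n) \<Rightarrow> 'a ^ 'n"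
    where "f = (\<lambda>(x, y, p). l *s x - y - p)"
  define Z where "Z = {g \<in> G. f g = 0}"
  have "card G \<le> card (f ` G) * card Z"
  proof (rule card_le_card_image_mult_card_kernel)
    fix g g' assume "g \<in> G" "g' \<in> G" "f g = f g'"
    moreover obtain x y p x' y' p' where g: "g = (x, y, p)" "g' = (x', y', p')"
      using prod_cases3 by metis
    moreover have "f (g - g') = f g - f g'"
      unfolding g by (simp add: f_def algebra_simps)
    ultimately show "g - g' \<in> Z"
      by (auto simp: G_def Z_def intro: line_diff subspace_over_diff[OF K S])
  qed auto
  also have "\<dots> \<le> q ^ 12 * card Z"
    using card_mono[of UNIV "f ` G"] assms(6) by (intro mult_right_mono) auto
  finally have "q ^ 5 * q ^ 12 \<le> card Z * q ^ 12"
    using assms(5,7) card_line[OF assms(3)]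
    by (simp add: G_def card_cartesian_product power_add[symmetric] mult.commute)
  then have "q ^ 5 \<le> card Z"
    by (rule mult_right_le_imp_le) (use two_le_card_subfield[OF K] assms(4) in simp)
  have "Z \<subseteq> (\<lambda>(x, y). (x, y, l *s x - y)) ` ((U \<inter> line u) \<times> (U \<inter> line u))"
  proof
    fix z assume "z \<in> Z"
    then obtain x y p where z: "z = (x, y, p)" "x \<in> U" "y \<in> U" "p \<in> line u" "p = l *s x - y"
      by (auto simp: Z_def G_def f_def)
    then have "x \<in> line u" using contra by blast
    moreover have "y = l *s x - p" using z(5) by simp
    ultimately have "y \<in> line u" using line_diff[OF line_smult z(4)] by simp
    with z \<open>x \<in> line u\<close> show "z \<in> (\<lambda>(x, y). (x, y, l *s x - y)) ` ((U \<inter> line u) \<times> (U \<inter> line u))"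
      by auto
  qed
  then have "card Z \<le> card ((\<lambda>(x, y). (x, y, l *s x - y)) ` ((U \<inter> line u) \<times> (U \<inter> line u)))"
    by (intro card_mono) auto
  also have "\<dots> \<le> card ((U \<inter> line u) \<times> (U \<inter> line u))" by (rule card_image_le) simp
  also have "\<dots> \<le> q ^ 2 * q ^ 2"
    unfolding card_cartesian_product by (rule mult_le_mono[OF assms(8) assms(8)])
  finally have "card Z \<le> q ^ 2 * q ^ 2" .
  moreover have "q ^ 2 * q ^ 2 < q ^ 5"
    using two_le_card_subfield[OF K] assms(4) by (simp add: power_add[symmetric] power_strict_increasing_iff)
  ultimately show False using \<open>q ^ 5 \<le> card Z\<close> by linarith
qed

lemma card_plane_inter_ge_if_translate:
  fixes U :: "('a::{field,finite} ^ 'n) set"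
  assumes K: "is_subfield K" and S: "subspace_over K U" and l: "l \<notin> K"
    and u: "u \<noteq> 0" "u \<in> U" "l *s u \<in> U"
    and x: "x \<in> U" "x \<notin> line u" and y: "y \<in> U" "l *s x - y \<in> line u"
  shows "card K ^ 4 \<le> card (U \<inter> plane u x)"
proof -
  obtain \<pi> where "l *s x - y = \<pi> *s u" using y(2) unfolding line_def by blast
  then have \<pi>: "y = l *s x - \<pi> *s u" by (simp flip: \<open>l *s x - y = \<pi> *s u\<close>)
  define F where "F = (\<lambda>(\<alpha>, \<beta>, \<gamma>, \<delta>). \<alpha> *s u + \<beta> *s (l *s u) + \<gamma> *s x + \<delta> *s y)"
  have F_coords: "F (\<alpha>, \<beta>, \<gamma>, \<delta>) = (\<alpha> + \<beta> * l - \<delta> * \<pi>) *s u + (\<gamma> + \<delta> * l) *s x"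
    for \<alpha> \<beta> \<gamma> \<delta> by (simp add: F_def \<pi> algebra_simps)
  have "inj_on F (K \<times> K \<times> K \<times> K)"
  proof (rule inj_onI)
    fix r r' assume r_K: "r \<in> K \<times> K \<times> K \<times> K" "r' \<in> K \<times> K \<times> K \<times> K" and "F r = F r'"
    obtain \<alpha> \<beta> \<gamma> \<delta> where r: "r = (\<alpha>, \<beta>, \<gamma>, \<delta>)" by (cases r) blast
    obtain \<alpha>' \<beta>' \<gamma>' \<delta>' where r': "r' = (\<alpha>', \<beta>', \<gamma>', \<delta>')" by (cases r') blast
    have in_K: "\<alpha> \<in> K" "\<beta> \<in> K" "\<gamma> \<in> K" "\<delta> \<in> K" "\<alpha>' \<in> K" "\<beta>' \<in> K" "\<gamma>' \<in> K" "\<delta>' \<in> K"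
      using r_K unfolding r r' by simp_all
    have "(\<alpha> + \<beta> * l - \<delta> * \<pi>) *s u + (\<gamma> + \<delta> * l) *s x
        = (\<alpha>' + \<beta>' * l - \<delta>' * \<pi>) *s u + (\<gamma>' + \<delta>' * l) *s x"
      using \<open>F r = F r'\<close> unfolding r r' F_coords .
    from smult_coords_unique[OF u(1) x(2) this]
    have u_coord: "\<alpha> + \<beta> * l - \<delta> * \<pi> = \<alpha>' + \<beta>' * l - \<delta>' * \<pi>"
      and x_coord: "\<gamma> + \<delta> * l = \<gamma>' + \<delta>' * l" by simp_all
    from subfield_coords_unique2[OF K l in_K(3,4,7,8) x_coord] have "\<gamma> = \<gamma>'" "\<delta> = \<delta>'" by simp_all
    with u_coord have "\<alpha> + \<beta> * l = \<alpha>' + \<beta>' * l" by simp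
    from subfield_coords_unique2[OF K l in_K(1,2,5,6) this] \<open>\<gamma> = \<gamma>'\<close> \<open>\<delta> = \<delta>'\<close>
    show "r = r'" unfolding r r' by simp
  qed
  moreover have "F ` (K \<times> K \<times> K \<times> K) \<subseteq> U \<inter> plane u x"
  proof -
    have "F r \<in> U" if r_K: "r \<in> K \<times> K \<times> K \<times> K" for r
    proof -
      obtain \<alpha> \<beta> \<gamma> \<delta> where r: "r = (\<alpha>, \<beta>, \<gamma>, \<delta>)" and "\<alpha> \<in> K" "\<beta> \<in> K" "\<gamma> \<in> K" "\<delta> \<in> K"
        using r_K by (cases r) auto
      then show ?thesis
        unfolding r F_def prod.case using u(2,3) x(1) y(1)
        by (blast intro: subspace_over_add[OF S] subspace_over_smult[OF S])
    qed
    moreover have "F r \<in> plane u x" for r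
    proof -
      obtain \<alpha> \<beta> \<gamma> \<delta> where r: "r = (\<alpha>, \<beta>, \<gamma>, \<delta>)" by (cases r) blast
      have "F r = (\<lambda>(c, d). c *s u + d *s x) (\<alpha> + \<beta> * l - \<delta> * \<pi>, \<gamma> + \<delta> * l)"
        unfolding r F_coords by simp
      then show ?thesis unfolding plane_def by (metis rangeI)
    qed
    ultimately show ?thesis by auto
  qed
  ultimately have "card (K \<times> K \<times> K \<times> K) \<le> card (U \<inter> plane u x)"
    by (intro card_inj_on_le) auto
  then show ?thesis by (simp add: card_cartesian_product power4_eq_xxxx mult.assoc)
qed

lemma exists_plane_meeting_subspace:
  fixes U :: "('a::{field,finite} ^ 'n) set"
  assumes K: "is_subfield K" and S: "subspace_over K U"
    and cK: "card K = q" and cL: "CARD('a) = q ^ 3" and "CARD('n) = 4" and cU: "card U = q ^ 7"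
  shows "\<exists>u x. q ^ 4 \<le> card (U \<inter> plane u x)"
proof -
  have q: "2 \<le> q" using two_le_card_subfield[OF K] cK by simp
  have cV: "CARD('a ^ 'n) = q ^ 12"
    using cL assms(5) by (simp add: CARD_vec power_mult[symmetric])
  have "card K < CARD('a)" using q cK cL power_strict_increasing[of 1 3 q] by simp
  then have "K \<noteq> UNIV" by auto
  then obtain l where l: "l \<notin> K" by blast
  have "CARD('a ^ 'n) < card U * card U"
    using q cV cU by (simp add: power_add[symmetric] power_strict_increasing_iff)
  then obtain u where u: "u \<in> U" "u \<noteq> 0" "l *s u \<in> U"
    using exists_vector_with_scaled_copy_in_subspace[OF K S] by blast
  show ?thesis
  proof (cases "line u \<subseteq> U")
    case True
    have "card (line u) < card U"
      using card_line[OF u(2)] q cL cU by (simp add: power_strict_increasing_iff)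
    then obtain x where "x \<in> U" "x \<notin> line u" by (metis card_mono finite subsetI not_le)
    then have "CARD('a) * card K \<le> card (U \<inter> plane u x)"
      by (rule card_plane_inter_ge_if_line_subset[OF S u(2) True])
    moreover have "q ^ 3 * q = q ^ 4" by (simp add: eval_nat_numeral)
    ultimately show ?thesis using cK cL by metis
  next
    case False
    have "card (U \<inter> line u) \<le> q ^ 2"
      using card_line_inter_subspace_le[OF K S _ l u(1,3) False] cK cL by simp
    then obtain x y where "x \<in> U" "y \<in> U" "x \<notin> line u" "l *s x - y \<in> line u"
      using exists_translate_off_line[OF K S u(2) cK cL cV cU] by blast
    then show ?thesis
      using card_plane_inter_ge_if_translate[OF K S l u(2,1,3)] cK by blast
  qed
qed

lemma exists_independent_forms_vanishing_on_plane:
  fixes u x :: "'a::{field,finite} ^ 'n"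
  assumes "4 \<le> CARD('n)"
  shows "\<exists>a b. a \<noteq> 0 \<and> (\<forall>c. b \<noteq> c *s a) \<and> plane u x \<subseteq> hyperplane a \<inter> hyperplane b"
proof -
  define N where "N = {v :: 'a ^ 'n. dot v u = 0 \<and> dot v x = 0}"
  have Q: "2 \<le> CARD('a)" using card_mono[of UNIV "{0, 1 :: 'a}"] by simp
  have "CARD('a) ^ 2 * CARD('a) ^ 2 \<le> CARD('a ^ 'n)"
    using assms Q by (simp add: CARD_vec power_add[symmetric] power_increasing)
  also have "\<dots> \<le> card ((\<lambda>v. (dot v u, dot v x)) ` UNIV) * card N"
    by (rule card_le_card_image_mult_card_kernel) (auto simp: N_def dot_diff_left)
  also have "\<dots> \<le> CARD('a) ^ 2 * card N"
    using card_mono[of "UNIV :: ('a \<times> 'a) set"] by (intro mult_right_mono) (auto simp: power2_eq_square)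
  finally have "CARD('a) ^ 2 \<le> card N" by (rule mult_left_le_imp_le) (use Q in simp)
  moreover have "CARD('a) < CARD('a) ^ 2" using Q power_strict_increasing[of 1 2 "CARD('a)"] by simp
  ultimately have cN: "CARD('a) < card N" by linarith
  have "\<not> N \<subseteq> {0}" using card_mono[of "{0}" N] cN Q by auto
  then obtain a where a: "a \<in> N" "a \<noteq> 0" by blast
  have "\<not> N \<subseteq> line a" using card_mono[of "line a" N] card_line[OF a(2)] cN by auto
  then obtain b where b: "b \<in> N" "b \<notin> line a" by blast
  have "plane u x \<subseteq> hyperplane v" if "v \<in> N" for v
    using that by (auto simp: plane_def N_def hyperplane_dot dot_add_right dot_smult_right)
  with a b show ?thesis unfolding line_def by blast
qed

lemma cutting_card_inter_plane_le:
  fixes U :: "('a::{field,finite} ^ 'n) set"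
  assumes "4 \<le> CARD('n)" and K: "is_subfield K" and S: "subspace_over K U" and cut: "cutting U"
  shows "card (U \<inter> plane u x) * (1 + (card K - 1) * CARD('a)) \<le> card U"
proof -
  obtain a b where ab: "a \<noteq> 0" "\<forall>c. b \<noteq> c *s a" "plane u x \<subseteq> hyperplane a \<inter> hyperplane b"
    using exists_independent_forms_vanishing_on_plane[OF assms(1)] by blast
  then have "card (U \<inter> plane u x) \<le> card (U \<inter> hyperplane a \<inter> hyperplane b)"
    by (intro card_mono) auto
  then show ?thesis
    using cutting_card_inter_hyperplanes_le[OF K S cut ab(1,2)] by (meson mult_le_mono1 order_trans)
qed

theorem corollary3p12:
  fixes K :: "'a::{field,finite} set" and q :: nat
  assumes "\<exists>p k. prime p \<and> k > 0 \<and> q = p ^ k"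
    and "is_subfield K" and "card K = q" and "CARD('a) = q ^ 3"
  shows "\<not> (\<exists>U :: ('a ^ 4) set. is_system K U 7 \<and> cutting U)"
proof
  assume "\<exists>U :: ('a ^ 4) set. is_system K U 7 \<and> cutting U"
  then obtain U :: "('a ^ 4) set" where sys: "is_system K U 7" and cut: "cutting U" by blast
  note K = assms(2) and cK = assms(3) and cL = assms(4)
  have q: "2 \<le> q" using two_le_card_subfield[OF K] cK by simp
  have S: "subspace_over K U" and cU: "card U = q ^ 7"
    using sys card_subspace_dim_over[OF K] cK by (auto simp: is_system_def subspace_dim_over_def)
  obtain u x where big: "q ^ 4 \<le> card (U \<inter> plane u x)"
    using exists_plane_meeting_subspace[OF K S cK cL _ cU] by auto
  have "card (U \<inter> plane u x) * (1 + (q - 1) * q ^ 3) \<le> q ^ 7"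
    using cutting_card_inter_plane_le[OF _ K S cut, of u x] cK cL cU by simp
  with big have "q ^ 4 * (1 + (q - 1) * q ^ 3) \<le> q ^ 7"
    by (meson mult_le_mono1 order_trans)
  moreover have "q ^ 7 < q ^ 4 * (1 + (q - 1) * q ^ 3)"
  proof -
    have "q ^ 7 \<le> (q - 1) * q ^ 7" using q by simp
    also have "\<dots> < q ^ 4 + (q - 1) * q ^ 7" using q by simp
    also have "\<dots> = q ^ 4 * (1 + (q - 1) * q ^ 3)"
      by (simp add: distrib_left mult.left_commute flip: power_add)
    finally show ?thesis .
  qed
  ultimately show False by simp
qed

end
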